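(* For every constant $c>0$ there is a constant $C>0$ such that for all integers $d,k,t$ with $1\le k\le c\sqrt{d}$, $2k\le d$, and $0\le t\le k-1$, \[ \|\mathcal{D}_t\|_1\le C\binom{d-k}{k-t}\binom{d}{t}2^{k-t}, \] where $\mathcal{D}_t$ is the $\binom{[d]}{k}\times\binom{[d]}{k}$ matrix with $\mathcal{D}_t(A,B)=1$ if $|A\cap B|=t$ and $0$ otherwise.
   Context: $\binom{[d]}{k}$ denotes the set of $k$-element subsets of $[d]=\{1,\dots,d\}$; $\mathcal{D}_t$ is the adjacency matrix of the generalized Johnson graph. $\|\cdot\|_1$ is the trace norm (sum of absolute values of eigenvalues for this symmetric matrix). *)

theory Defs
  imports "Jordan_Normal_Form.Char_Poly"
begin

definition ksubsets :: "nat \<Rightarrow> nat \<Rightarrow> nat set set" where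
  "ksubsets d k = {A. A \<subseteq> {1..d} \<and> card A = k}"

(* A fixed enumeration (without repetition) of the k-subsets of [d];
   the trace norm below does not depend on the choice (permutation similarity). *)
definition ksub_list :: "nat \<Rightarrow> nat \<Rightarrow> nat set list" where
  "ksub_list d k = (SOME xs. distinct xs \<and> set xs = ksubsets d k)"

definition johnson_mat :: "nat \<Rightarrow> nat \<Rightarrow> nat \<Rightarrow> real mat" where
  "johnson_mat d k t =
     (let xs = ksub_list d k
      in mat (length xs) (length xs)
           (\<lambda>(i, j). if card (xs ! i \<inter> xs ! j) = t then 1 else 0))"

definition trace_norm_sym :: "real mat \<Rightarrow> real" where
  "trace_norm_sym M =
     (\<Sum>a\<in>{a. poly (char_poly M) a = 0}. real (order a (char_poly M)) * \<bar>a\<bar>)"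

end

theory Submission
  imports Defs "Jordan_Normal_Form.Schur_Decomposition"
begin

(* Write M_s for the matrix with entries (card (A \<inter> B) choose s). Inclusion-exclusion gives
   D_t = (\<Sum>j\<le>k-t. (-1)^j * (t+j choose t) * M_(t+j)), and each M_s is the Gram matrix of the
   indicator vectors of the s-subsets of [d], hence positive semidefinite. So the trace norm of
   D_t is at most (\<Sum>j. (t+j choose t) * trace M_(t+j)) = (d choose k) (k choose t) 2^(k-t)
   = (d choose t) (d-t choose k-t) 2^(k-t), and (d-t choose k-t) exceeds (d-k choose k-t) by at
   most the factor exp ((k-t)^2 / (d-2k+1)), which is bounded in terms of c since k^2 \<le> c^2 d.

   The triangle inequality for the trace norm comes from an orthogonal basis u_i of C^n that
   triangularises D_t (Schur decomposition followed by Gram-Schmidt): the eigenvalues of D_t are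
   then its Rayleigh quotients at the u_i, and the Rayleigh quotients of any matrix at an
   orthogonal basis sum to its trace. *)

section \<open>Orthogonal bases of C^n\<close>

(* Vectors of C^n are functions nat \<Rightarrow> complex; only their values below n matter. *)
definition cinner :: "nat \<Rightarrow> (nat \<Rightarrow> complex) \<Rightarrow> (nat \<Rightarrow> complex) \<Rightarrow> complex" where
  "cinner n x y = (\<Sum>a<n. x a * cnj (y a))"

definition orthogonal_family :: "nat \<Rightarrow> nat \<Rightarrow> (nat \<Rightarrow> nat \<Rightarrow> complex) \<Rightarrow> bool" where
  "orthogonal_family n k u \<longleftrightarrow>
     (\<forall>i<k. \<forall>j<k. i \<noteq> j \<longrightarrow> cinner n (u i) (u j) = 0) \<and> (\<forall>i<k. cinner n (u i) (u i) \<noteq> 0)"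

definition in_span_first :: "nat \<Rightarrow> (nat \<Rightarrow> nat \<Rightarrow> complex) \<Rightarrow> nat \<Rightarrow> (nat \<Rightarrow> complex) \<Rightarrow> bool" where
  "in_span_first n f k v \<longleftrightarrow> (\<exists>r. \<forall>a<n. v a = (\<Sum>l<k. r l * f l a))"

definition mult_mat_fun :: "complex mat \<Rightarrow> (nat \<Rightarrow> complex) \<Rightarrow> nat \<Rightarrow> complex" where
  "mult_mat_fun A v a = (\<Sum>b<dim_col A. A $$ (a, b) * v b)"

lemma cinner_commute: "cinner n y x = cnj (cinner n x y)"
  unfolding cinner_def by (simp add: mult.commute)

lemma cinner_self: "cinner n x x = of_real (\<Sum>a<n. (cmod (x a))\<^sup>2)"
  unfolding cinner_def by (simp only: of_real_sum complex_norm_square)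

lemma cinner_self_eq_0D:
  assumes "cinner n x x = 0" and "a < n"
  shows "x a = 0"
proof -
  have "(\<Sum>a<n. (cmod (x a))\<^sup>2) = 0"
    using assms(1) unfolding cinner_self of_real_eq_0_iff .
  then have "(cmod (x a))\<^sup>2 = 0"
    using assms(2) by (subst (asm) sum_nonneg_eq_0_iff) auto
  then show ?thesis by simp
qed

lemma cinner_self_pos:
  assumes "cinner n x x \<noteq> 0"
  shows "cinner n x x = of_real (Re (cinner n x x))" and "0 < Re (cinner n x x)"
proof -
  define S where "S = (\<Sum>a<n. (cmod (x a))\<^sup>2)"
  have "cinner n x x = of_real S" unfolding S_def by (rule cinner_self)
  moreover have "0 \<le> S" unfolding S_def by (intro sum_nonneg) auto
  ultimately show "cinner n x x = of_real (Re (cinner n x x))" and "0 < Re (cinner n x x)"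
    using assms by auto
qed

lemma cinner_diff_lincomb:
  "cinner n (\<lambda>a. x a - (\<Sum>m\<in>F. c m * y m a)) z = cinner n x z - (\<Sum>m\<in>F. c m * cinner n (y m) z)"
  unfolding cinner_def
  by (simp add: algebra_simps sum_subtractf sum_distrib_left sum_distrib_right sum.swap[of _ F])

lemma cinner_residual_orthogonal:
  assumes orth: "orthogonal_family n k u" and m: "m < k"
  shows "cinner n (\<lambda>a. x a - (\<Sum>l<k. cinner n x (u l) / cinner n (u l) (u l) * u l a)) (u m) = 0"
proof -
  have "(\<Sum>l<k. cinner n x (u l) / cinner n (u l) (u l) * cinner n (u l) (u m))
      = (\<Sum>l<k. if l = m then cinner n x (u m) / cinner n (u m) (u m) * cinner n (u m) (u m) else 0)"
    by (rule sum.cong) (use orth m in \<open>auto simp: orthogonal_family_def\<close>)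
  also have "\<dots> = cinner n x (u m)"
    using orth m by (simp add: orthogonal_family_def)
  finally show ?thesis unfolding cinner_diff_lincomb by simp
qed

lemma orthogonal_family_extend:
  assumes orth: "orthogonal_family n k u"
    and w_orth: "\<And>m. m < k \<Longrightarrow> cinner n w (u m) = 0" and w_nz: "cinner n w w \<noteq> 0"
  shows "orthogonal_family n (Suc k) (u(k := w))"
  unfolding orthogonal_family_def
proof (intro conjI allI impI)
  fix i j assume "i < Suc k" "j < Suc k" "i \<noteq> j"
  then consider "i < k" "j < k" | "i = k" "j < k" | "j = k" "i < k" by linarith
  then show "cinner n ((u(k := w)) i) ((u(k := w)) j) = 0"
  proof cases
    case 1 with orth \<open>i \<noteq> j\<close> show ?thesis by (simp add: orthogonal_family_def)
  next
    case 2 with w_orth show ?thesis by simp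
  next
    case 3 with w_orth show ?thesis by (subst cinner_commute) simp
  qed
next
  fix i assume "i < Suc k"
  with orth w_nz show "cinner n ((u(k := w)) i) ((u(k := w)) i) \<noteq> 0"
    by (cases "i = k") (auto simp: orthogonal_family_def)
qed

lemma in_span_first_zero: "in_span_first n f k (\<lambda>a. 0)"
  unfolding in_span_first_def by (rule exI[of _ "\<lambda>_. 0"]) simp

lemma in_span_first_add:
  assumes "in_span_first n f k v" and "in_span_first n f k w"
  shows "in_span_first n f k (\<lambda>a. v a + w a)"
proof -
  obtain r s where "\<forall>a<n. v a = (\<Sum>l<k. r l * f l a)" and "\<forall>a<n. w a = (\<Sum>l<k. s l * f l a)"
    using assms unfolding in_span_first_def by blast
  then show ?thesis unfolding in_span_first_def
    by (intro exI[of _ "\<lambda>l. r l + s l"]) (simp add: distrib_right sum.distrib)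
qed

lemma in_span_first_smult:
  assumes "in_span_first n f k v"
  shows "in_span_first n f k (\<lambda>a. c * v a)"
proof -
  obtain r where "\<forall>a<n. v a = (\<Sum>l<k. r l * f l a)"
    using assms unfolding in_span_first_def by blast
  then show ?thesis unfolding in_span_first_def
    by (intro exI[of _ "\<lambda>l. c * r l"]) (simp add: sum_distrib_left mult.assoc)
qed

lemma in_span_first_sum:
  assumes "finite F" and "\<And>m. m \<in> F \<Longrightarrow> in_span_first n f k (v m)"
  shows "in_span_first n f k (\<lambda>a. \<Sum>m\<in>F. c m * v m a)"
  using assms
proof (induction F rule: finite_induct)
  case empty then show ?case using in_span_first_zero by simp
next
  case (insert x F)
  have "in_span_first n f k (\<lambda>a. c x * v x a + (\<Sum>m\<in>F. c m * v m a))"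
    by (rule in_span_first_add[OF in_span_first_smult]) (use insert in auto)
  then show ?case using insert by simp
qed

lemma in_span_first_mono:
  assumes "in_span_first n f k v" and "k \<le> k'"
  shows "in_span_first n f k' v"
proof -
  obtain r where r: "\<forall>a<n. v a = (\<Sum>l<k. r l * f l a)"
    using assms(1) unfolding in_span_first_def by blast
  have "(\<Sum>l<k'. (if l < k then r l else 0) * f l a) = (\<Sum>l<k. r l * f l a)" for a
    by (subst sum.mono_neutral_right[of "{..<k'}" "{..<k}"]) (use assms(2) in auto)
  with r show ?thesis unfolding in_span_first_def
    by (intro exI[of _ "\<lambda>l. if l < k then r l else 0"]) simp
qed

lemma in_span_first_self:
  assumes "l < k"
  shows "in_span_first n f k (f l)"
proof -
  have "(\<Sum>m<k. (if m = l then 1 else 0) * f m a) = (\<Sum>m<k. if m = l then f m a else 0)" for a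
    by (rule sum.cong) auto
  then have "(\<Sum>m<k. (if m = l then 1 else 0) * f m a) = f l a" for a
    using assms by simp
  then show ?thesis unfolding in_span_first_def
    by (intro exI[of _ "\<lambda>m. if m = l then 1 else 0"]) simp
qed

lemma in_span_first_cong:
  "in_span_first n f k v \<Longrightarrow> (\<And>a. a < n \<Longrightarrow> w a = v a) \<Longrightarrow> in_span_first n f k w"
  unfolding in_span_first_def by auto

lemma in_span_first_family_cong:
  "in_span_first n f k v \<Longrightarrow> (\<And>m a. m < k \<Longrightarrow> a < n \<Longrightarrow> g m a = f m a) \<Longrightarrow> in_span_first n g k v"
  unfolding in_span_first_def by (auto intro!: sum.cong)

lemma in_span_first_fun_upd:
  "in_span_first n u l v \<Longrightarrow> l \<le> k \<Longrightarrow> in_span_first n (u(k := w)) l v"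
  by (erule in_span_first_family_cong) auto

lemma cinner_eq_0_if_in_span_first:
  assumes "in_span_first n f k v" and "\<And>m. m < k \<Longrightarrow> cinner n w (f m) = 0"
  shows "cinner n w v = 0"
proof -
  obtain r where r: "\<forall>a<n. v a = (\<Sum>l<k. r l * f l a)"
    using assms(1) unfolding in_span_first_def by blast
  have "cinner n w v = (\<Sum>a<n. w a * cnj (\<Sum>l<k. r l * f l a))"
    unfolding cinner_def by (rule sum.cong) (auto simp: r)
  also have "\<dots> = (\<Sum>l<k. cnj (r l) * cinner n w (f l))"
    unfolding cinner_def
    by (simp add: sum_distrib_left sum_distrib_right sum.swap[of _ "{..<k}"] mult_ac)
  also have "\<dots> = 0" using assms(2) by simp
  finally show ?thesis .
qed

lemma in_span_first_mult_mat_fun: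
  assumes A: "A \<in> carrier_mat n n" and v: "in_span_first n f k v"
    and f: "\<And>l. l < k \<Longrightarrow> in_span_first n f k' (mult_mat_fun A (f l))"
  shows "in_span_first n f k' (mult_mat_fun A v)"
proof -
  obtain r where r: "\<forall>a<n. v a = (\<Sum>l<k. r l * f l a)"
    using v unfolding in_span_first_def by blast
  have "mult_mat_fun A v = (\<lambda>a. \<Sum>l\<in>{..<k}. r l * mult_mat_fun A (f l) a)"
    using A unfolding mult_mat_fun_def
    by (simp add: fun_eq_iff r sum_distrib_left sum.swap[of _ "{..<k}"] mult_ac)
  moreover have "in_span_first n f k' (\<lambda>a. \<Sum>l\<in>{..<k}. r l * mult_mat_fun A (f l) a)"
    by (rule in_span_first_sum) (use f in auto)
  ultimately show ?thesis by simp
qed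

lemma not_in_span_first_if_left_inverse:
  assumes QP: "\<And>i l. i < k \<Longrightarrow> l < k \<Longrightarrow> (\<Sum>a<n. Q i a * p l a) = (if i = l then 1 else 0)"
    and i: "i < k"
  shows "\<not> in_span_first n p i (p i)"
proof
  assume "in_span_first n p i (p i)"
  then obtain r where r: "\<forall>a<n. p i a = (\<Sum>l<i. r l * p l a)"
    unfolding in_span_first_def by blast
  have "(\<Sum>a<n. Q i a * p i a) = (\<Sum>a<n. Q i a * (\<Sum>l<i. r l * p l a))"
    by (rule sum.cong) (auto simp: r)
  also have "\<dots> = (\<Sum>l<i. r l * (\<Sum>a<n. Q i a * p l a))"
    by (simp add: sum_distrib_left sum.swap[of _ "{..<i}"] mult_ac)
  also have "\<dots> = 0" using QP i by (auto intro!: sum.neutral)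
  finally show False using QP[OF i i] by simp
qed

lemma gram_schmidt_step:
  assumes orth: "orthogonal_family n k u"
    and u_in_p: "\<forall>j<k. in_span_first n p (Suc j) (u j)"
    and indep: "\<not> in_span_first n p k (p k)"
  defines "w \<equiv> \<lambda>a. p k a - (\<Sum>m<k. cinner n (p k) (u m) / cinner n (u m) (u m) * u m a)"
  shows "orthogonal_family n (Suc k) (u(k := w))"
    and "in_span_first n p (Suc k) w"
    and "in_span_first n (u(k := w)) (Suc k) (p k)"
proof -
  define c where "c m = cinner n (p k) (u m) / cinner n (u m) (u m)" for m
  have w: "w = (\<lambda>a. p k a - (\<Sum>m<k. c m * u m a))"
    unfolding w_def c_def by simp
  have proj_in_p: "in_span_first n p k (\<lambda>a. \<Sum>m\<in>{..<k}. c m * u m a)"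
    by (rule in_span_first_sum) (use u_in_p in \<open>auto intro: in_span_first_mono\<close>)
  have "in_span_first n p (Suc k) (\<lambda>a. p k a + (-1) * (\<Sum>m\<in>{..<k}. c m * u m a))"
    by (intro in_span_first_add in_span_first_self in_span_first_smult
        in_span_first_mono[OF proj_in_p]) auto
  then show "in_span_first n p (Suc k) w" by (simp add: w)
  have "cinner n w w \<noteq> 0"
  proof
    assume "cinner n w w = 0"
    then have "in_span_first n p k (p k)"
      by (intro in_span_first_cong[OF proj_in_p]) (auto simp: w dest: cinner_self_eq_0D)
    with indep show False ..
  qed
  moreover have "cinner n w (u m) = 0" if "m < k" for m
    using cinner_residual_orthogonal[OF orth that, of "p k"] unfolding w_def .
  ultimately show "orthogonal_family n (Suc k) (u(k := w))"
    by (intro orthogonal_family_extend[OF orth])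
  have "(\<Sum>m\<in>{..<k}. c m * (u(k := w)) m a) = (\<Sum>m<k. c m * u m a)" for a
    by (rule sum.cong) auto
  moreover have "in_span_first n (u(k := w)) (Suc k)
      (\<lambda>a. 1 * (u(k := w)) k a + (\<Sum>m\<in>{..<k}. c m * (u(k := w)) m a))"
    by (intro in_span_first_add in_span_first_smult in_span_first_sum in_span_first_self) auto
  ultimately show "in_span_first n (u(k := w)) (Suc k) (p k)" by (simp add: w)
qed

lemma gram_schmidt_flag:
  assumes "\<And>i. i < k \<Longrightarrow> \<not> in_span_first n p i (p i)"
  shows "\<exists>u. orthogonal_family n k u \<and> (\<forall>j<k. in_span_first n p (Suc j) (u j))
            \<and> (\<forall>j<k. in_span_first n u (Suc j) (p j))"
  using assms
proof (induction k)
  case 0 show ?case by (simp add: orthogonal_family_def)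
next
  case (Suc k)
  then obtain u where orth: "orthogonal_family n k u"
    and u_in_p: "\<forall>j<k. in_span_first n p (Suc j) (u j)"
    and p_in_u: "\<forall>j<k. in_span_first n u (Suc j) (p j)"
    by auto
  define w where "w = (\<lambda>a. p k a - (\<Sum>m<k. cinner n (p k) (u m) / cinner n (u m) (u m) * u m a))"
  note step = gram_schmidt_step[OF orth u_in_p Suc.prems[OF lessI], folded w_def]
  show ?case
  proof (intro exI conjI allI impI)
    show "orthogonal_family n (Suc k) (u(k := w))" by (rule step(1))
  next
    fix j assume "j < Suc k"
    with u_in_p step(2) show "in_span_first n p (Suc j) ((u(k := w)) j)"
      by (cases "j = k") auto
  next
    fix j assume "j < Suc k"
    with p_in_u step(3) show "in_span_first n (u(k := w)) (Suc j) (p j)"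
      by (cases "j = k") (auto intro: in_span_first_fun_upd)
  qed
qed

section \<open>Unitary triangularisation\<close>

lemma index_mult_mat_sum:
  "A \<in> carrier_mat n m \<Longrightarrow> B \<in> carrier_mat m k \<Longrightarrow> i < n \<Longrightarrow> j < k \<Longrightarrow>
   (A * B) $$ (i, j) = (\<Sum>b<m. A $$ (i, b) * B $$ (b, j))"
  by (auto simp: scalar_prod_def atLeast0LessThan intro!: sum.cong)

lemma in_span_first_cols_upper_triangular:
  assumes A: "A \<in> carrier_mat n n" and B: "B \<in> carrier_mat n n" and P: "P \<in> carrier_mat n n"
    and AP: "A * P = P * B" and ut: "upper_triangular B" and l: "l < n"
  shows "in_span_first n (\<lambda>m a. P $$ (a, m)) (Suc l) (mult_mat_fun A (\<lambda>a. P $$ (a, l)))"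
  unfolding in_span_first_def
proof (intro exI[of _ "\<lambda>m. B $$ (m, l)"] allI impI)
  fix a assume a: "a < n"
  have "mult_mat_fun A (\<lambda>a. P $$ (a, l)) a = (A * P) $$ (a, l)"
    using A by (simp add: mult_mat_fun_def index_mult_mat_sum[OF A P a l])
  also have "\<dots> = (\<Sum>m<n. P $$ (a, m) * B $$ (m, l))"
    unfolding AP by (rule index_mult_mat_sum[OF P B a l])
  also have "\<dots> = (\<Sum>m<Suc l. P $$ (a, m) * B $$ (m, l))"
    by (rule sum.mono_neutral_right) (use ut B l in \<open>auto simp: upper_triangular_def\<close>)
  finally show "mult_mat_fun A (\<lambda>a. P $$ (a, l)) a = (\<Sum>m<Suc l. B $$ (m, l) * P $$ (a, m))"
    by (simp add: mult.commute)
qed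

lemma schur_triangularization:
  fixes A :: "complex mat"
  assumes A: "A \<in> carrier_mat n n"
  obtains B P Q where "B \<in> carrier_mat n n" and "P \<in> carrier_mat n n" and "Q \<in> carrier_mat n n"
    and "Q * P = 1\<^sub>m n" and "A * P = P * B" and "upper_triangular B"
proof -
  obtain es where "char_poly A = (\<Prod>a\<leftarrow>es. [:- a, 1:])"
    using char_poly_factorized[OF A] by auto
  then obtain B where B: "B \<in> carrier_mat n n" and ut: "upper_triangular B" and "similar_mat A B"
    using schur_decomposition_exists[OF A] by blast
  then obtain P Q where "similar_mat_wit A B P Q" unfolding similar_mat_def by blast
  note PQ = similar_mat_witD2[OF A this]
  have P: "P \<in> carrier_mat n n" and Q: "Q \<in> carrier_mat n n" using PQ by auto
  have "A * P = P * B * Q * P" using PQ(3) by simp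
  also have "\<dots> = P * B * (Q * P)" using P B Q by (simp add: assoc_mult_mat[of _ n n _ n _ n])
  finally have "A * P = P * B" using PQ(2) P B by simp
  with B P Q PQ(2) ut that show ?thesis by blast
qed

lemma triangularizing_orthogonal_basis:
  fixes A :: "complex mat"
  assumes A: "A \<in> carrier_mat n n"
  obtains u where "orthogonal_family n n u"
    and "\<And>i j. i < j \<Longrightarrow> j < n \<Longrightarrow> cinner n (mult_mat_fun A (u i)) (u j) = 0"
proof -
  obtain B P Q where B: "B \<in> carrier_mat n n" and P: "P \<in> carrier_mat n n"
    and Q: "Q \<in> carrier_mat n n" and QP: "Q * P = 1\<^sub>m n" and AP: "A * P = P * B"
    and ut: "upper_triangular B"
    using schur_triangularization[OF A] by blast
  define p where "p = (\<lambda>l a. P $$ (a, l))"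
  have "\<not> in_span_first n p i (p i)" if "i < n" for i
  proof (rule not_in_span_first_if_left_inverse[OF _ that])
    fix i l assume "i < n" "l < n"
    then show "(\<Sum>a<n. Q $$ (i, a) * p l a) = (if i = l then 1 else 0)"
      using index_mult_mat_sum[OF Q P, of i l] QP unfolding p_def by simp
  qed
  then obtain u where orth: "orthogonal_family n n u"
    and u_in_p: "\<forall>j<n. in_span_first n p (Suc j) (u j)"
    and p_in_u: "\<forall>j<n. in_span_first n u (Suc j) (p j)"
    using gram_schmidt_flag[of n n p] by blast
  have "cinner n (mult_mat_fun A (u i)) (u j) = 0" if ij: "i < j" "j < n" for i j
  proof -
    have "in_span_first n p (Suc i) (mult_mat_fun A (u i))"
    proof (rule in_span_first_mult_mat_fun[OF A])
      show "in_span_first n p (Suc i) (u i)" using u_in_p ij by simp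
      show "in_span_first n p (Suc i) (mult_mat_fun A (p l))" if "l < Suc i" for l
        using in_span_first_cols_upper_triangular[OF A B P AP ut, of l] that ij
        unfolding p_def by (auto intro: in_span_first_mono)
    qed
    moreover have "cinner n (u j) (p m) = 0" if "m < Suc i" for m
      by (rule cinner_eq_0_if_in_span_first[OF p_in_u[rule_format]])
        (use that ij orth in \<open>auto simp: orthogonal_family_def\<close>)
    ultimately have "cinner n (u j) (mult_mat_fun A (u i)) = 0"
      by (rule cinner_eq_0_if_in_span_first)
    then show ?thesis by (subst cinner_commute) simp
  qed
  with orth that show ?thesis by blast
qed

lemma orthogonal_basis_change:
  fixes A :: "complex mat"
  assumes orth: "orthogonal_family n n u" and A: "A \<in> carrier_mat n n"
  obtains C where "C \<in> carrier_mat n n" and "similar_mat A C"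
    and "\<And>i j. i < n \<Longrightarrow> j < n \<Longrightarrow>
           C $$ (j, i) = cinner n (mult_mat_fun A (u i)) (u j) / cinner n (u j) (u j)"
proof -
  define U where "U = mat n n (\<lambda>(a, i). u i a)"
  define V where "V = mat n n (\<lambda>(i, a). cnj (u i a) / cinner n (u i) (u i))"
  have U: "U \<in> carrier_mat n n" and V: "V \<in> carrier_mat n n" unfolding U_def V_def by auto
  have VU: "V * U = 1\<^sub>m n"
  proof (rule eq_matI)
    fix i j assume ij: "i < dim_row (1\<^sub>m n)" "j < dim_col (1\<^sub>m n)"
    then have "(V * U) $$ (i, j) = cinner n (u j) (u i) / cinner n (u i) (u i)"
      using index_mult_mat_sum[OF V U, of i j] unfolding U_def V_def cinner_def
      by (simp add: sum_divide_distrib mult_ac)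
    also have "\<dots> = 1\<^sub>m n $$ (i, j)"
      using ij orth unfolding orthogonal_family_def by auto
    finally show "(V * U) $$ (i, j) = 1\<^sub>m n $$ (i, j)" .
  qed (auto simp: U_def V_def)
  have UV: "U * V = 1\<^sub>m n" by (rule mat_mult_left_right_inverse[OF V U VU])
  define C where "C = V * (A * U)"
  show ?thesis
  proof
    show C: "C \<in> carrier_mat n n" unfolding C_def using A U V by auto
    have "U * C * V = (U * V) * (A * (U * V))"
      unfolding C_def using A U V by (simp add: assoc_mult_mat[of _ n n _ n _ n])
    then show "similar_mat A C"
      using A U V C UV VU by (intro similar_matI[of A C U V n]) auto
  next
    fix i j assume ij: "i < n" "j < n"
    have AU: "(A * U) $$ (a, i) = mult_mat_fun A (u i) a" if "a < n" for a
      using index_mult_mat_sum[OF A U that ij(1)] A ij(1) unfolding mult_mat_fun_def U_def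
      by simp
    have "C $$ (j, i) = (\<Sum>a<n. V $$ (j, a) * (A * U) $$ (a, i))"
      unfolding C_def using index_mult_mat_sum[OF V _ ij(2,1), of "A * U"] A U by simp
    also have "\<dots> = cinner n (mult_mat_fun A (u i)) (u j) / cinner n (u j) (u j)"
      using ij AU unfolding V_def cinner_def by (simp add: sum_divide_distrib mult_ac)
    finally show "C $$ (j, i) = cinner n (mult_mat_fun A (u i)) (u j) / cinner n (u j) (u j)" .
  qed
qed

definition mat_trace :: "'a :: comm_ring_1 mat \<Rightarrow> 'a" where
  "mat_trace A = (\<Sum>i<dim_row A. A $$ (i, i))"

lemma mat_trace_mult_commute:
  assumes A: "A \<in> carrier_mat n m" and B: "B \<in> carrier_mat m n"
  shows "mat_trace (A * B) = mat_trace (B * A)"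
proof -
  have "mat_trace (A * B) = (\<Sum>i<n. \<Sum>j<m. A $$ (i, j) * B $$ (j, i))"
    unfolding mat_trace_def using A by (auto intro!: sum.cong simp: index_mult_mat_sum[OF A B])
  also have "\<dots> = (\<Sum>j<m. \<Sum>i<n. B $$ (j, i) * A $$ (i, j))"
    by (subst sum.swap) (simp add: mult.commute)
  also have "\<dots> = mat_trace (B * A)"
    unfolding mat_trace_def using B by (auto intro!: sum.cong simp: index_mult_mat_sum[OF B A])
  finally show ?thesis .
qed

lemma mat_trace_similar:
  assumes "similar_mat A B"
  shows "mat_trace A = mat_trace B"
proof -
  obtain n P Q where "{A, B, P, Q} \<subseteq> carrier_mat n n"
    and QP: "Q * P = 1\<^sub>m n" and A_eq: "A = P * B * Q"
    using similar_matD[OF assms] by blast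
  then have B: "B \<in> carrier_mat n n" and P: "P \<in> carrier_mat n n" and Q: "Q \<in> carrier_mat n n"
    by auto
  have "mat_trace A = mat_trace (P * (B * Q))" using A_eq B P Q by simp
  also have "\<dots> = mat_trace (B * Q * P)" using B P Q by (intro mat_trace_mult_commute) auto
  also have "\<dots> = mat_trace B" using B P Q QP by simp
  finally show ?thesis .
qed

definition quad_form :: "complex mat \<Rightarrow> (nat \<Rightarrow> complex) \<Rightarrow> complex" where
  "quad_form A v = cinner (dim_row A) (mult_mat_fun A v) v"

definition rayleigh :: "complex mat \<Rightarrow> (nat \<Rightarrow> complex) \<Rightarrow> complex" where
  "rayleigh A v = quad_form A v / cinner (dim_row A) v v"

lemma char_poly_eq_prod_rayleigh:
  assumes A: "A \<in> carrier_mat n n" and orth: "orthogonal_family n n u"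
    and tri: "\<And>i j. i < j \<Longrightarrow> j < n \<Longrightarrow> cinner n (mult_mat_fun A (u i)) (u j) = 0"
  shows "char_poly A = (\<Prod>i\<leftarrow>[0..<n]. [:- rayleigh A (u i), 1:])"
proof -
  obtain C where C: "C \<in> carrier_mat n n" and sim: "similar_mat A C"
    and C_eq: "\<And>i j. i < n \<Longrightarrow> j < n \<Longrightarrow>
                C $$ (j, i) = cinner n (mult_mat_fun A (u i)) (u j) / cinner n (u j) (u j)"
    using orthogonal_basis_change[OF orth A] by blast
  have "upper_triangular C" using C by (auto simp: C_eq tri)
  have "char_poly A = char_poly C" by (rule char_poly_similar[OF sim])
  also have "\<dots> = (\<Prod>a\<leftarrow>diag_mat C. [:- a, 1:])"
    by (rule char_poly_upper_triangular[OF C \<open>upper_triangular C\<close>])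
  also have "diag_mat C = map (\<lambda>i. rayleigh A (u i)) [0..<n]"
    using A C by (auto simp: diag_mat_def C_eq rayleigh_def quad_form_def)
  finally show ?thesis by (simp add: comp_def)
qed

lemma mat_trace_eq_sum_rayleigh:
  assumes A: "A \<in> carrier_mat n n" and orth: "orthogonal_family n n u"
  shows "mat_trace A = (\<Sum>i<n. rayleigh A (u i))"
proof -
  obtain C where C: "C \<in> carrier_mat n n" and sim: "similar_mat A C"
    and C_eq: "\<And>i j. i < n \<Longrightarrow> j < n \<Longrightarrow>
                C $$ (j, i) = cinner n (mult_mat_fun A (u i)) (u j) / cinner n (u j) (u j)"
    using orthogonal_basis_change[OF orth A] by blast
  have "mat_trace A = mat_trace C" by (rule mat_trace_similar[OF sim])
  also have "\<dots> = (\<Sum>i<n. rayleigh A (u i))"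
    using A C by (simp add: mat_trace_def C_eq rayleigh_def quad_form_def)
  finally show ?thesis .
qed

section \<open>Trace norm of a combination of positive semidefinite matrices\<close>

definition nonneg_quad_form :: "complex mat \<Rightarrow> bool" where
  "nonneg_quad_form A \<longleftrightarrow> (\<forall>v. quad_form A v \<in> \<real> \<and> 0 \<le> Re (quad_form A v))"

lemma rayleigh_nonneg:
  assumes "nonneg_quad_form A" and "cinner (dim_row A) v v \<noteq> 0"
  shows "rayleigh A v = of_real (Re (rayleigh A v))" and "0 \<le> Re (rayleigh A v)"
proof -
  have q: "quad_form A v = of_real (Re (quad_form A v))" "0 \<le> Re (quad_form A v)"
    using assms(1) unfolding nonneg_quad_form_def by (auto elim: Reals_cases)
  note w = cinner_self_pos[OF assms(2)]
  have "rayleigh A v = of_real (Re (quad_form A v) / Re (cinner (dim_row A) v v))"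
    unfolding rayleigh_def by (subst q(1), subst w(1)) simp
  then show "rayleigh A v = of_real (Re (rayleigh A v))" and "0 \<le> Re (rayleigh A v)"
    using q(2) w(2) by auto
qed

lemma quad_form_lincomb:
  assumes A: "A \<in> carrier_mat n n" and B: "\<And>s. s \<in> F \<Longrightarrow> B s \<in> carrier_mat n n"
    and A_eq: "\<And>a b. a < n \<Longrightarrow> b < n \<Longrightarrow> A $$ (a, b) = (\<Sum>s\<in>F. c s * B s $$ (a, b))"
  shows "quad_form A v = (\<Sum>s\<in>F. c s * quad_form (B s) v)"
proof -
  have "quad_form A v = (\<Sum>a<n. \<Sum>b<n. \<Sum>s\<in>F. c s * (B s $$ (a, b) * v b * cnj (v a)))"
    using A unfolding quad_form_def cinner_def mult_mat_fun_def
    by (auto intro!: sum.cong simp: A_eq sum_distrib_left sum_distrib_right mult_ac)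
  also have "\<dots> = (\<Sum>s\<in>F. c s * (\<Sum>a<n. \<Sum>b<n. B s $$ (a, b) * v b * cnj (v a)))"
    by (simp add: sum_distrib_left sum.swap[of _ F])
  also have "\<dots> = (\<Sum>s\<in>F. c s * quad_form (B s) v)"
  proof (rule sum.cong[OF refl])
    fix s assume "s \<in> F"
    with B have "dim_row (B s) = n" "dim_col (B s) = n" by auto
    then show "c s * (\<Sum>a<n. \<Sum>b<n. B s $$ (a, b) * v b * cnj (v a)) = c s * quad_form (B s) v"
      unfolding quad_form_def cinner_def mult_mat_fun_def by (simp add: sum_distrib_right)
  qed
  finally show ?thesis .
qed

lemma order_prod_linear: "Polynomial.order a (\<Prod>x\<leftarrow>xs. [:- x, 1:]) = count_list xs a"
proof -
  have "Polynomial.order a (\<Prod>x\<leftarrow>xs. [:- x, 1:]) = (\<Sum>x\<leftarrow>xs. if x = a then 1 else 0)"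
    by (subst order_prod_list) (auto simp: order_linear' comp_def)
  also have "\<dots> = count_list xs a" by (induction xs) auto
  finally show ?thesis .
qed

lemma sum_count_list_mult:
  fixes f :: "'a \<Rightarrow> 'b :: semiring_1"
  assumes "finite S" and "set xs \<subseteq> S"
  shows "(\<Sum>a\<in>S. of_nat (count_list xs a) * f a) = (\<Sum>x\<leftarrow>xs. f x)"
  using assms(2)
proof (induction xs)
  case (Cons x xs)
  have "of_nat (count_list (x # xs) a) * f a = of_nat (count_list xs a) * f a + (if x = a then f a else 0)"
    for a by (simp add: distrib_right add.commute)
  then have "(\<Sum>a\<in>S. of_nat (count_list (x # xs) a) * f a)
      = (\<Sum>a\<in>S. of_nat (count_list xs a) * f a) + (\<Sum>a\<in>S. if x = a then f a else 0)"
    by (simp only: sum.distrib)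
  also have "\<dots> = (\<Sum>x\<leftarrow>xs. f x) + f x"
    using Cons assms(1) by simp
  finally show ?case by (simp add: add.commute)
qed simp

lemma trace_norm_sym_prod_linear:
  assumes "char_poly D = (\<Prod>x\<leftarrow>xs. [:- x, 1:])"
  shows "trace_norm_sym D = (\<Sum>x\<leftarrow>xs. \<bar>x\<bar>)"
proof -
  have "{a. poly (\<Prod>x\<leftarrow>xs. [:- x, 1:]) a = 0} = set xs"
    by (auto simp: poly_prod_list prod_list_zero_iff)
  then show ?thesis
    unfolding trace_norm_sym_def assms by (simp add: order_prod_linear sum_count_list_mult)
qed

lemma trace_norm_sym_eq_sum_abs_rayleigh:
  fixes D :: "real mat"
  assumes D: "D \<in> carrier_mat n n" and orth: "orthogonal_family n n u"
    and tri: "\<And>i j. i < j \<Longrightarrow> j < n \<Longrightarrow> cinner n (mult_mat_fun (map_mat of_real D) (u i)) (u j) = 0"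
    and real: "\<And>i. i < n \<Longrightarrow> rayleigh (map_mat of_real D) (u i) = of_real (r i)"
  shows "trace_norm_sym D = (\<Sum>i<n. \<bar>r i\<bar>)"
proof -
  interpret of_real_poly: map_poly_inj_idom_hom "of_real :: real \<Rightarrow> complex" ..
  have "map_poly of_real (char_poly D) = char_poly (map_mat of_real D)"
    by (rule of_real_hom.char_poly_hom[OF D, symmetric])
  also have "\<dots> = (\<Prod>i\<leftarrow>[0..<n]. [:- rayleigh (map_mat of_real D) (u i), 1:])"
    using D by (intro char_poly_eq_prod_rayleigh orth tri) auto
  also have "\<dots> = (\<Prod>i\<leftarrow>[0..<n]. [:- of_real (r i), 1:])"
    by (intro arg_cong[where f = prod_list] map_cong refl) (simp add: real)
  also have "\<dots> = map_poly of_real (\<Prod>x\<leftarrow>map r [0..<n]. [:- x, 1:])"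
    by (simp add: of_real_poly.hom_prod_list comp_def)
  finally have "char_poly D = (\<Prod>x\<leftarrow>map r [0..<n]. [:- x, 1:])" by simp
  then have "trace_norm_sym D = (\<Sum>x\<leftarrow>map r [0..<n]. \<bar>x\<bar>)"
    by (rule trace_norm_sym_prod_linear)
  also have "\<dots> = (\<Sum>i<n. \<bar>r i\<bar>)"
    by (simp add: sum_list_distinct_conv_sum_set atLeast0LessThan)
  finally show ?thesis .
qed

lemma trace_norm_sym_le_psd_combination:
  fixes D :: "real mat" and M :: "'i \<Rightarrow> real mat"
  assumes D: "D \<in> carrier_mat n n" and M: "\<And>s. s \<in> F \<Longrightarrow> M s \<in> carrier_mat n n"
    and D_eq: "\<And>a b. a < n \<Longrightarrow> b < n \<Longrightarrow> D $$ (a, b) = (\<Sum>s\<in>F. c s * M s $$ (a, b))"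
    and psd: "\<And>s. s \<in> F \<Longrightarrow> nonneg_quad_form (map_mat complex_of_real (M s))"
  shows "trace_norm_sym D \<le> (\<Sum>s\<in>F. \<bar>c s\<bar> * mat_trace (M s))"
proof -
  define A where "A = map_mat complex_of_real D"
  define B where "B s = map_mat complex_of_real (M s)" for s
  have A: "A \<in> carrier_mat n n" and B: "\<And>s. s \<in> F \<Longrightarrow> B s \<in> carrier_mat n n"
    unfolding A_def B_def using D M by auto
  obtain u where orth: "orthogonal_family n n u"
    and tri: "\<And>i j. i < j \<Longrightarrow> j < n \<Longrightarrow> cinner n (mult_mat_fun A (u i)) (u j) = 0"
    using triangularizing_orthogonal_basis[OF A] by blast
  have A_eq: "A $$ (a, b) = (\<Sum>s\<in>F. of_real (c s) * B s $$ (a, b))" if "a < n" "b < n" for a b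
  proof -
    have "B s $$ (a, b) = of_real (M s $$ (a, b))" if "s \<in> F" for s
      using M[OF that] \<open>a < n\<close> \<open>b < n\<close> by (simp add: B_def)
    then show ?thesis using D that by (simp add: A_def D_eq of_real_sum)
  qed
  define \<rho> where "\<rho> s i = Re (rayleigh (B s) (u i))" for s i
  have \<rho>: "rayleigh (B s) (u i) = of_real (\<rho> s i)" "0 \<le> \<rho> s i" if "s \<in> F" "i < n" for s i
    using rayleigh_nonneg[of "B s" "u i"] psd[OF that(1)] orth B[OF that(1)] that(2)
    unfolding \<rho>_def B_def by (auto simp: orthogonal_family_def)
  define r where "r i = (\<Sum>s\<in>F. c s * \<rho> s i)" for i
  have rayleigh_A: "rayleigh A (u i) = of_real (r i)" if "i < n" for i
  proof -
    have "quad_form A (u i) = (\<Sum>s\<in>F. of_real (c s) * quad_form (B s) (u i))"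
      by (rule quad_form_lincomb[OF A B A_eq])
    then have "rayleigh A (u i) = (\<Sum>s\<in>F. of_real (c s) * rayleigh (B s) (u i))"
      using A B by (simp add: rayleigh_def sum_divide_distrib carrier_matD(1)[OF B])
    then show ?thesis using \<rho> that by (simp add: r_def of_real_sum)
  qed
  have "trace_norm_sym D = (\<Sum>i<n. \<bar>r i\<bar>)"
    using trace_norm_sym_eq_sum_abs_rayleigh[OF D orth, folded A_def] tri rayleigh_A by blast
  also have "\<dots> \<le> (\<Sum>i<n. \<Sum>s\<in>F. \<bar>c s\<bar> * \<rho> s i)"
    unfolding r_def by (intro sum_mono order.trans[OF sum_abs] eq_refl sum.cong) (auto simp: abs_mult \<rho>)
  also have "\<dots> = (\<Sum>s\<in>F. \<bar>c s\<bar> * (\<Sum>i<n. \<rho> s i))"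
    by (subst sum.swap) (simp add: sum_distrib_left)
  also have "\<dots> = (\<Sum>s\<in>F. \<bar>c s\<bar> * mat_trace (M s))"
  proof (intro sum.cong refl)
    fix s assume s: "s \<in> F"
    have "of_real (mat_trace (M s)) = mat_trace (B s)"
      using M[OF s] by (simp add: B_def mat_trace_def of_real_sum)
    also have "\<dots> = of_real (\<Sum>i<n. \<rho> s i)"
      using mat_trace_eq_sum_rayleigh[OF B[OF s] orth] \<rho>[OF s] by (simp add: of_real_sum)
    finally have "mat_trace (M s) = (\<Sum>i<n. \<rho> s i)" by (simp only: of_real_eq_iff)
    then show "\<bar>c s\<bar> * (\<Sum>i<n. \<rho> s i) = \<bar>c s\<bar> * mat_trace (M s)" by simp
  qed
  finally show ?thesis .
qed

section \<open>The generalised Johnson matrices\<close>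

lemma finite_ksubsets: "finite (ksubsets d k)"
  unfolding ksubsets_def by (rule finite_subset[of _ "Pow {1..d}"]) auto

lemma ksub_list: "distinct (ksub_list d k)" "set (ksub_list d k) = ksubsets d k"
proof -
  have "\<exists>xs. distinct xs \<and> set xs = ksubsets d k"
    using finite_distinct_list[OF finite_ksubsets] by metis
  then have "distinct (ksub_list d k) \<and> set (ksub_list d k) = ksubsets d k"
    unfolding ksub_list_def by (rule someI_ex)
  then show "distinct (ksub_list d k)" "set (ksub_list d k) = ksubsets d k" by auto
qed

lemma length_ksub_list: "length (ksub_list d k) = d choose k"
proof -
  have "card (ksubsets d k) = d choose k"
    unfolding ksubsets_def using n_subsets[of "{1..d}" k] by simp
  then show ?thesis using distinct_card[OF ksub_list(1)] ksub_list(2) by simp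
qed

lemma alternating_sum_choose_choose:
  fixes m t K :: nat
  assumes "m \<le> t + K"
  shows "(\<Sum>j\<le>K. (-1::real) ^ j * real ((t + j) choose t) * real (m choose (t + j)))
           = (if m = t then 1 else 0)"
proof (cases "m < t")
  case True
  then show ?thesis by (auto intro!: sum.neutral)
next
  case False
  define r where "r = m - t"
  have m: "m = t + r" and rK: "r \<le> K" using False assms unfolding r_def by auto
  have choose_eq: "(-1::real) ^ j * real ((t + j) choose t) * real (m choose (t + j))
      = real (m choose t) * ((-1) ^ j * real (r choose j))" for j
  proof (cases "j \<le> r")
    case True
    have "(m choose (t + j)) * ((t + j) choose t) = (m choose t) * ((m - t) choose (t + j - t))"
      by (rule choose_mult) (use True m in auto)
    then show ?thesis unfolding r_def[symmetric] by (simp add: mult_ac flip: of_nat_mult)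
  qed (use m in \<open>simp add: binomial_eq_0\<close>)
  have "(\<Sum>j\<le>K. (-1::real) ^ j * real ((t + j) choose t) * real (m choose (t + j)))
      = real (m choose t) * (\<Sum>j\<le>K. (-1::real) ^ j * real (r choose j))"
    by (simp only: choose_eq sum_distrib_left)
  also have "(\<Sum>j\<le>K. (-1::real) ^ j * real (r choose j)) = (\<Sum>j\<le>r. (-1::real) ^ j * real (r choose j))"
    by (rule sum.mono_neutral_right) (use rK in auto)
  also have "\<dots> = (if m = t then 1 else 0)"
    using choose_alternating_sum[of r, where 'a = real] m by auto
  finally show ?thesis by simp
qed

lemma sum_choose_choose:
  fixes t K :: nat
  shows "(\<Sum>j\<le>K. real ((t + j) choose t) * real ((t + K) choose (t + j)))
           = real ((t + K) choose t) * 2 ^ K"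
proof -
  have "real ((t + j) choose t) * real ((t + K) choose (t + j)) = real ((t + K) choose t) * real (K choose j)"
    if "j \<le> K" for j
  proof -
    have "((t + K) choose (t + j)) * ((t + j) choose t)
        = ((t + K) choose t) * ((t + K - t) choose (t + j - t))"
      by (rule choose_mult) (use that in auto)
    then show ?thesis by (simp add: mult.commute flip: of_nat_mult)
  qed
  then have "(\<Sum>j\<le>K. real ((t + j) choose t) * real ((t + K) choose (t + j)))
      = real ((t + K) choose t) * real (\<Sum>j\<le>K. K choose j)"
    by (simp add: sum_distrib_left)
  then show ?thesis by (simp add: choose_row_sum)
qed

(* card (X a \<inter> X b) choose s counts the s-sets S \<subseteq> U contained in both X a and X b, so the
   quadratic form is the sum over such S of the squares |\<Sum>b with S \<subseteq> X b. v b|^2. *)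
lemma nonneg_quad_form_card_inter_choose:
  assumes U: "finite U" and X: "\<And>a. a < n \<Longrightarrow> X a \<subseteq> U"
  shows "nonneg_quad_form (mat n n (\<lambda>(a, b). of_nat (card (X a \<inter> X b) choose s)))"
    (is "nonneg_quad_form ?M")
  unfolding nonneg_quad_form_def
proof
  fix v :: "nat \<Rightarrow> complex"
  define T where "T = {S. S \<subseteq> U \<and> card S = s}"
  define z where "z S = (\<Sum>b<n. if S \<subseteq> X b then v b else 0)" for S
  have T: "finite T" unfolding T_def using U by simp
  have card_eq: "of_nat (card (X a \<inter> X b) choose s)
      = (\<Sum>S\<in>T. (if S \<subseteq> X b then 1 else 0) * (if S \<subseteq> X a then 1 else 0) :: complex)"
    if "a < n" for a b
  proof -
    have "finite (X a \<inter> X b)" using X[OF that] U finite_subset by blast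
    then have "card (X a \<inter> X b) choose s = card {S. S \<subseteq> X a \<inter> X b \<and> card S = s}"
      by (rule n_subsets[symmetric])
    also have "{S. S \<subseteq> X a \<inter> X b \<and> card S = s} = {S \<in> T. S \<subseteq> X a \<and> S \<subseteq> X b}"
      unfolding T_def using X[OF that] by auto
    also have "\<dots> = T \<inter> {S. S \<subseteq> X a \<and> S \<subseteq> X b}" by blast
    finally have "of_nat (card (X a \<inter> X b) choose s)
        = (\<Sum>S\<in>T. if S \<subseteq> X a \<and> S \<subseteq> X b then 1 else 0 :: complex)"
      using T by (simp add: sum.If_cases)
    moreover have "(\<Sum>S\<in>T. (if S \<subseteq> X b then 1 else 0) * (if S \<subseteq> X a then 1 else 0) :: complex)
        = (\<Sum>S\<in>T. if S \<subseteq> X a \<and> S \<subseteq> X b then 1 else 0)"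
      by (rule sum.cong) auto
    ultimately show ?thesis by simp
  qed
  have "quad_form ?M v
      = (\<Sum>a<n. \<Sum>b<n. \<Sum>S\<in>T. (if S \<subseteq> X b then v b else 0) * cnj (if S \<subseteq> X a then v a else 0))"
    unfolding quad_form_def cinner_def mult_mat_fun_def
    by (intro sum.cong refl) (auto simp: card_eq sum_distrib_left sum_distrib_right intro!: sum.cong)
  also have "\<dots> = (\<Sum>a<n. \<Sum>S\<in>T. \<Sum>b<n. (if S \<subseteq> X b then v b else 0) * cnj (if S \<subseteq> X a then v a else 0))"
    by (intro sum.cong refl sum.swap)
  also have "\<dots> = (\<Sum>S\<in>T. \<Sum>a<n. \<Sum>b<n. (if S \<subseteq> X b then v b else 0) * cnj (if S \<subseteq> X a then v a else 0))"
    by (rule sum.swap)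
  also have "\<dots> = (\<Sum>S\<in>T. z S * cnj (z S))"
    unfolding z_def by (simp add: sum_distrib_left sum_distrib_right mult.commute)
  also have "\<dots> = of_real (\<Sum>S\<in>T. (cmod (z S))\<^sup>2)"
    by (simp only: of_real_sum complex_norm_square)
  finally show "quad_form ?M v \<in> \<real> \<and> 0 \<le> Re (quad_form ?M v)"
    by (simp add: sum_nonneg)
qed

lemma trace_norm_johnson_mat_le:
  assumes "t \<le> k"
  shows "trace_norm_sym (johnson_mat d k t) \<le> real (d choose k) * real (k choose t) * 2 ^ (k - t)"
proof -
  define n where "n = d choose k"
  define X where "X a = ksub_list d k ! a" for a
  define K where "K = k - t"
  have k: "k = t + K" using assms unfolding K_def by simp
  have X: "X a \<subseteq> {1..d}" "card (X a) = k" if "a < n" for a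
    using nth_mem[of a "ksub_list d k"] ksub_list(2) that
    unfolding X_def n_def length_ksub_list ksubsets_def by auto
  define M where "M j = mat n n (\<lambda>(a, b). real (card (X a \<inter> X b) choose (t + j)))" for j
  define c where "c j = (-1::real) ^ j * real ((t + j) choose t)" for j
  have D: "johnson_mat d k t = mat n n (\<lambda>(a, b). if card (X a \<inter> X b) = t then 1 else 0)"
    unfolding johnson_mat_def Let_def X_def n_def length_ksub_list by simp
  have "trace_norm_sym (johnson_mat d k t) \<le> (\<Sum>j\<le>K. \<bar>c j\<bar> * mat_trace (M j))"
  proof (rule trace_norm_sym_le_psd_combination)
    fix a b assume ab: "a < n" "b < n"
    have "card (X a \<inter> X b) \<le> t + K"
      using card_mono[of "X a" "X a \<inter> X b"] X[OF ab(1)] k finite_subset by fastforce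
    then show "johnson_mat d k t $$ (a, b) = (\<Sum>j\<le>K. c j * M j $$ (a, b))"
      unfolding D c_def M_def using ab alternating_sum_choose_choose by (simp add: mult.assoc)
  next
    fix j
    have "map_mat complex_of_real (M j) = mat n n (\<lambda>(a, b). of_nat (card (X a \<inter> X b) choose (t + j)))"
      unfolding M_def by auto
    then show "nonneg_quad_form (map_mat complex_of_real (M j))"
      using nonneg_quad_form_card_inter_choose[of "{1..d}" n X] X by simp
  qed (auto simp: D M_def)
  also have "\<dots> = real n * (\<Sum>j\<le>K. real ((t + j) choose t) * real ((t + K) choose (t + j)))"
    unfolding sum_distrib_left c_def M_def mat_trace_def
    by (intro sum.cong refl) (simp add: X k abs_mult)
  also have "\<dots> = real n * real (k choose t) * 2 ^ (k - t)"
    unfolding sum_choose_choose k by simp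
  finally show ?thesis unfolding n_def .
qed

section \<open>Binomial estimates\<close>

lemma choose_add_le:
  fixes a m :: nat
  assumes "m \<le> a"
  shows "real ((a + i) choose m) \<le> real (a choose m) * (1 + real m / (real a - real m + 1)) ^ i"
proof (induction i)
  case (Suc i)
  define N where "N = a + i"
  have "real (Suc N - m) * real (Suc N choose m) = real (Suc N) * real (N choose m)"
    using binomial_absorb_comp[of "Suc N" m] by (metis diff_Suc_1 of_nat_mult)
  moreover have "real (Suc N - m) > 0" using assms unfolding N_def by simp
  ultimately have step: "real (Suc N choose m) = real (N choose m) * (real (Suc N) / real (Suc N - m))"
    by (simp add: field_simps)
  have "real (Suc N) / real (Suc N - m) = 1 + real m / (real N - real m + 1)"
    using assms unfolding N_def by (simp add: of_nat_diff field_simps)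
  also have "\<dots> \<le> 1 + real m / (real a - real m + 1)"
    using assms unfolding N_def by (intro add_left_mono divide_left_mono) auto
  finally have "real (Suc N choose m) \<le> real (N choose m) * (1 + real m / (real a - real m + 1))"
    unfolding step by (intro mult_left_mono) auto
  also have "\<dots> \<le> real (a choose m) * (1 + real m / (real a - real m + 1)) ^ i * (1 + real m / (real a - real m + 1))"
    using Suc.IH assms unfolding N_def by (intro mult_right_mono) auto
  finally show ?case unfolding N_def by (simp add: mult_ac)
qed simp

lemma choose_add_le_exp:
  fixes a m :: nat
  assumes "m \<le> a"
  shows "real ((a + i) choose m) \<le> real (a choose m) * exp (real i * real m / (real a - real m + 1))"
proof -
  have "(1 + real m / (real a - real m + 1)) ^ i \<le> exp (real m / (real a - real m + 1)) ^ i"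
    using assms by (intro power_mono) (auto simp: exp_ge_add_one_self)
  also have "\<dots> = exp (real i * real m / (real a - real m + 1))"
    by (simp flip: exp_of_nat_mult)
  finally have "real (a choose m) * (1 + real m / (real a - real m + 1)) ^ i
      \<le> real (a choose m) * exp (real i * real m / (real a - real m + 1))"
    by (rule mult_left_mono) simp
  with choose_add_le[OF assms, of i] show ?thesis by (rule order.trans)
qed

lemma square_div_le_of_le_sqrt:
  fixes c x y :: real
  assumes c: "c > 0" and x: "1 \<le> x" and xy: "2 * x \<le> y" and x_le: "x \<le> c * sqrt y"
  shows "x * x / (y - 2 * x + 1) \<le> 2 * c\<^sup>2 + 16 * c ^ 4"
proof -
  have c4: "0 \<le> c ^ 4" using c by simp
  have sq: "x * x \<le> c\<^sup>2 * y"
  proof -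
    have "x * x \<le> (c * sqrt y) * (c * sqrt y)" using x_le x by (intro mult_mono) auto
    also have "\<dots> = c\<^sup>2 * y" using xy x by (simp add: power2_eq_square algebra_simps)
    finally show ?thesis .
  qed
  show ?thesis
  proof (cases "4 * x \<le> y")
    case True
    then have "x * x / (y - 2 * x + 1) \<le> x * x / (y / 2)"
      using x by (intro divide_left_mono) auto
    also have "\<dots> \<le> 2 * c\<^sup>2"
      using sq True x by (simp add: pos_divide_le_eq)
    finally show ?thesis using c4 by linarith
  next
    case False
    then have "c\<^sup>2 * y < c\<^sup>2 * (4 * x)" using c by (intro mult_strict_left_mono) auto
    then have "x * x < 4 * c\<^sup>2 * x" using sq by (simp add: mult_ac)
    then have "x < 4 * c\<^sup>2" using x by simp
    then have "x * x \<le> (4 * c\<^sup>2) * (4 * c\<^sup>2)" using x by (intro mult_mono) auto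
    also have "\<dots> = 16 * c ^ 4" by (simp add: eval_nat_numeral mult_ac)
    finally have "x * x \<le> 16 * c ^ 4" .
    moreover have "x * x / (y - 2 * x + 1) \<le> x * x / 1"
      using xy x by (intro divide_left_mono) auto
    ultimately show ?thesis using c by (simp add: add_increasing)
  qed
qed

lemma choose_mult_choose_le_exp:
  fixes c :: real and d k t :: nat
  assumes c: "c > 0" and k: "1 \<le> k" "real k \<le> c * sqrt (real d)" "2 * k \<le> d" and t: "t < k"
  shows "real (d choose k) * real (k choose t)
           \<le> exp (2 * c\<^sup>2 + 16 * c ^ 4) * real ((d - k) choose (k - t)) * real (d choose t)"
proof -
  define a m where "a = d - k" and "m = k - t"
  have m: "m \<le> a" "m \<le> k" and d: "d - t = a + m" using k t unfolding a_def m_def by auto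
  have "real m * real m / (real a - real m + 1) \<le> real k * real k / (real d - 2 * real k + 1)"
    using m k by (intro frac_le mult_mono) (auto simp: a_def of_nat_diff)
  also have "\<dots> \<le> 2 * c\<^sup>2 + 16 * c ^ 4"
    using square_div_le_of_le_sqrt[OF c, of "real k" "real d"] k by simp
  finally have exponent: "real m * real m / (real a - real m + 1) \<le> 2 * c\<^sup>2 + 16 * c ^ 4" .
  have "real (d choose k) * real (k choose t) = real (d choose t) * real ((a + m) choose m)"
    using choose_mult[of t k d] k t unfolding d m_def by (simp flip: of_nat_mult)
  also have "\<dots> \<le> real (d choose t) * (real (a choose m) * exp (real m * real m / (real a - real m + 1)))"
    using choose_add_le_exp[OF m(1), of m] by (intro mult_left_mono) auto
  also have "\<dots> \<le> real (d choose t) * (real (a choose m) * exp (2 * c\<^sup>2 + 16 * c ^ 4))"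
    using exponent by (intro mult_left_mono) auto
  finally show ?thesis unfolding a_def m_def by (simp add: mult_ac)
qed

theorem fact3:
  fixes c :: real
  assumes "c > 0"
  shows "\<exists>C > 0. \<forall>d k t :: nat.
           1 \<le> k \<and> real k \<le> c * sqrt (real d) \<and> 2 * k \<le> d \<and> t \<le> k - 1 \<longrightarrow>
           trace_norm_sym (johnson_mat d k t)
             \<le> C * real ((d - k) choose (k - t)) * real (d choose t) * 2 ^ (k - t)"
proof (intro exI[of _ "exp (2 * c\<^sup>2 + 16 * c ^ 4)"] conjI allI impI)
  fix d k t :: nat
  assume "1 \<le> k \<and> real k \<le> c * sqrt (real d) \<and> 2 * k \<le> d \<and> t \<le> k - 1"
  then have k: "1 \<le> k" "real k \<le> c * sqrt (real d)" "2 * k \<le> d" and t: "t < k" by auto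
  have "trace_norm_sym (johnson_mat d k t) \<le> real (d choose k) * real (k choose t) * 2 ^ (k - t)"
    using t by (intro trace_norm_johnson_mat_le) simp
  also have "\<dots> \<le> exp (2 * c\<^sup>2 + 16 * c ^ 4) * real ((d - k) choose (k - t)) * real (d choose t) * 2 ^ (k - t)"
    using choose_mult_choose_le_exp[OF \<open>c > 0\<close> k t] by (intro mult_right_mono) auto
  finally show "trace_norm_sym (johnson_mat d k t)
      \<le> exp (2 * c\<^sup>2 + 16 * c ^ 4) * real ((d - k) choose (k - t)) * real (d choose t) * 2 ^ (k - t)" .
qed simp

end
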